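(* Let $G$ be a group and $\xi\colon G\to\mathbb{R}$ a (continuous, if $G$ is topological) polynomial map of degree $\deg\xi=d\ge1$. Then for every $s\in G$, the map $\varphi_\xi\colon g\mapsto(\partial_g\xi)(s)$ is a (continuous) polynomial map of degree $\deg\varphi_\xi=(d\dot-1)\dot+1$. The same holds for $g\mapsto(\overleftarrow{\partial}_g\xi)(s)$.
   Context: For $\xi\colon G\to\mathbb{R}$, $(\partial_g\xi)(h)=\xi(g^{-1}h)-\xi(h)$ (left difference) and $(\overleftarrow{\partial}_g\xi)(h)=\xi(hg)-\xi(h)$ (right difference). $\xi$ is a polynomial of degree at most $d$ if $\partial_{g_1}\cdots\partial_{g_{d+1}}\xi\equiv0$ for all $g_i$ (equivalently with right differences); $\deg\xi$ is the least such $d\in\mathbb{Z}_*=\{-\infty\}\cup\mathbb{N}_0$, with $\deg0=-\infty$. On $\mathbb{Z}_*$: $x\dot+y=x+y$ for $x,y\in\mathbb{N}_0$ and $-\infty$ if either is $-\infty$; $x\dot-y=x-y$ if $x\ge y\in\mathbb{N}_0$, and $-\infty$ if $x=-\infty$ or $x<y$. *)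

theory Defs
  imports "HOL-Algebra.Group" "HOL-Analysis.Analysis"
begin

text \<open>Extended degrees Z_* = {-inf} \<union> N_0, modelled as nat option (None = -inf).\<close>

fun zdot_plus :: "nat option \<Rightarrow> nat option \<Rightarrow> nat option" where
  "zdot_plus (Some x) (Some y) = Some (x + y)"
| "zdot_plus _ _ = None"

fun zdot_minus :: "nat option \<Rightarrow> nat option \<Rightarrow> nat option" where
  "zdot_minus (Some x) (Some y) = (if y \<le> x then Some (x - y) else None)"
| "zdot_minus _ _ = None"

definition ldiff :: "('a, 'b) monoid_scheme \<Rightarrow> 'a \<Rightarrow> ('a \<Rightarrow> real) \<Rightarrow> 'a \<Rightarrow> real" where
  "ldiff G g xi h = xi (inv\<^bsub>G\<^esub> g \<otimes>\<^bsub>G\<^esub> h) - xi h"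

definition rdiff :: "('a, 'b) monoid_scheme \<Rightarrow> 'a \<Rightarrow> ('a \<Rightarrow> real) \<Rightarrow> 'a \<Rightarrow> real" where
  "rdiff G g xi h = xi (h \<otimes>\<^bsub>G\<^esub> g) - xi h"

fun ldiffs :: "('a, 'b) monoid_scheme \<Rightarrow> 'a list \<Rightarrow> ('a \<Rightarrow> real) \<Rightarrow> 'a \<Rightarrow> real" where
  "ldiffs G [] xi = xi"
| "ldiffs G (g # gs) xi = ldiff G g (ldiffs G gs xi)"

definition poly_deg_le :: "('a, 'b) monoid_scheme \<Rightarrow> ('a \<Rightarrow> real) \<Rightarrow> nat \<Rightarrow> bool" where
  "poly_deg_le G xi d \<longleftrightarrow>
     (\<forall>gs. length gs = Suc d \<and> set gs \<subseteq> carrier G \<longrightarrow>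
        (\<forall>h\<in>carrier G. ldiffs G gs xi h = 0))"

definition is_poly_map :: "('a, 'b) monoid_scheme \<Rightarrow> ('a \<Rightarrow> real) \<Rightarrow> bool" where
  "is_poly_map G xi \<longleftrightarrow> (\<exists>d. poly_deg_le G xi d)"

definition poly_deg :: "('a, 'b) monoid_scheme \<Rightarrow> ('a \<Rightarrow> real) \<Rightarrow> nat option" where
  "poly_deg G xi = (if \<forall>h\<in>carrier G. xi h = 0 then None
                    else Some (LEAST d. poly_deg_le G xi d))"

definition group_topology :: "('a, 'b) monoid_scheme \<Rightarrow> 'a topology \<Rightarrow> bool" where
  "group_topology G T \<longleftrightarrow> topspace T = carrier G
     \<and> continuous_map (prod_topology T T) T (\<lambda>(x, y). x \<otimes>\<^bsub>G\<^esub> y)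
     \<and> continuous_map T T (\<lambda>x. inv\<^bsub>G\<^esub> x)"

end

theory Submission
  imports Defs
begin

text \<open>
  The map \<open>g \<mapsto> (\<partial>\<^sub>g\<xi>)(s) = \<xi>(g\<inverse>s) - \<xi>(s)\<close> arises from \<open>\<xi>\<close> by inversion, left translation
  by \<open>s\<inverse>\<close> and subtraction of a constant; its right-difference analogue \<open>g \<mapsto> \<xi>(sg) - \<xi>(s)\<close>
  by left translation by \<open>s\<close> and a constant.  None of these operations changes which degree
  bounds hold: a constant disappears under every difference, left translation by \<open>k\<close> turns
  \<open>\<partial>\<^sub>g\<close> into \<open>\<partial>\<^bsub>kgk\<inverse>\<^esub>\<close>, and inversion turns \<open>\<partial>\<^sub>g\<close> into a right difference, which commutes
  with left differences and therefore lowers degree bounds just as a left difference does.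
  So the map has the degree \<open>d = (d \<ominus> 1) \<oplus> 1\<close> of \<open>\<xi>\<close> (it is nonzero because \<open>d \<ge> 1\<close>), and
  continuity is inherited from the continuity of the group operations.
\<close>

lemma ldiffs_snoc: "ldiffs G (gs @ [g]) f = ldiffs G gs (ldiff G g f)"
  by (induction gs) auto

lemma poly_deg_le_0_iff:
  "poly_deg_le G f 0 \<longleftrightarrow> (\<forall>g\<in>carrier G. \<forall>h\<in>carrier G. ldiff G g f h = 0)"
proof
  assume "poly_deg_le G f 0"
  then show "\<forall>g\<in>carrier G. \<forall>h\<in>carrier G. ldiff G g f h = 0"
    unfolding poly_deg_le_def by (metis empty_subsetI insert_subset ldiffs.simps
        length_Cons list.set(1) list.set(2) list.size(3))
next
  assume vanish: "\<forall>g\<in>carrier G. \<forall>h\<in>carrier G. ldiff G g f h = 0"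
  show "poly_deg_le G f 0"
    unfolding poly_deg_le_def
  proof (intro allI impI ballI)
    fix gs h assume "length gs = Suc 0 \<and> set gs \<subseteq> carrier G" "h \<in> carrier G"
    then show "ldiffs G gs f h = 0"
      using vanish by (cases gs) auto
  qed
qed

lemma poly_deg_le_Suc_iff:
  "poly_deg_le G f (Suc m) \<longleftrightarrow> (\<forall>g\<in>carrier G. poly_deg_le G (ldiff G g f) m)"
proof
  assume "poly_deg_le G f (Suc m)"
  then show "\<forall>g\<in>carrier G. poly_deg_le G (ldiff G g f) m"
    unfolding poly_deg_le_def by (metis ldiffs_snoc length_append_singleton set_append
        Un_subset_iff empty_subsetI insert_subset list.set(1) list.set(2))
next
  assume diffs: "\<forall>g\<in>carrier G. poly_deg_le G (ldiff G g f) m"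
  show "poly_deg_le G f (Suc m)"
    unfolding poly_deg_le_def
  proof (intro allI impI ballI)
    fix gs h assume gs: "length gs = Suc (Suc m) \<and> set gs \<subseteq> carrier G" and "h \<in> carrier G"
    then obtain gs' g where "gs = gs' @ [g]" "length gs' = Suc m" "set gs' \<subseteq> carrier G" "g \<in> carrier G"
      by (cases gs rule: rev_cases) auto
    then show "ldiffs G gs f h = 0"
      using diffs \<open>h \<in> carrier G\<close> by (simp add: ldiffs_snoc poly_deg_le_def)
  qed
qed

lemma ldiffs_diff_const:
  "gs \<noteq> [] \<Longrightarrow> ldiffs G gs (\<lambda>x. f x - c) = ldiffs G gs f"
proof (induction gs)
  case (Cons g gs)
  show ?case
  proof (cases "gs = []")
    case True
    then show ?thesis by (simp add: ldiff_def)
  next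
    case False
    then show ?thesis using Cons.IH by simp
  qed
qed simp

lemma poly_deg_le_diff_const_iff: "poly_deg_le G (\<lambda>x. f x - c) n \<longleftrightarrow> poly_deg_le G f n"
  unfolding poly_deg_le_def by (metis ldiffs_diff_const list.size(3) nat.distinct(1))

context group
begin

lemma ldiffs_cong:
  assumes "\<And>x. x \<in> carrier G \<Longrightarrow> f x = f' x" "set gs \<subseteq> carrier G" "h \<in> carrier G"
  shows "ldiffs G gs f h = ldiffs G gs f' h"
  using assms(2,3) by (induction gs arbitrary: h) (auto simp: ldiff_def assms(1))

lemma poly_deg_le_cong:
  assumes "\<And>x. x \<in> carrier G \<Longrightarrow> f x = f' x"
  shows "poly_deg_le G f n \<longleftrightarrow> poly_deg_le G f' n"
  unfolding poly_deg_le_def using ldiffs_cong[OF assms] by auto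

lemma ldiff_rdiff_commute:
  assumes "g \<in> carrier G" "k \<in> carrier G" "h \<in> carrier G"
  shows "ldiff G g (rdiff G k f) h = rdiff G k (ldiff G g f) h"
  using assms by (simp add: ldiff_def rdiff_def m_assoc)

text \<open>A map annihilated by all left differences is constant, so its right differences vanish:
  \<open>\<xi>(hk) - \<xi>(h) = (\<partial>\<^sub>g\<xi>)(h)\<close> for \<open>g = h k\<inverse> h\<inverse>\<close>.\<close>
lemma rdiff_eq_0_if_poly_deg_le_0:
  assumes "poly_deg_le G f 0" "k \<in> carrier G" "h \<in> carrier G"
  shows "rdiff G k f h = 0"
proof -
  let ?g = "h \<otimes> inv k \<otimes> inv h"
  have "inv ?g \<otimes> h = h \<otimes> k"
    using assms(2,3) by (simp add: inv_mult_group m_assoc)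
  moreover have "ldiff G ?g f h = 0"
    using assms by (simp add: poly_deg_le_0_iff)
  ultimately show ?thesis by (simp add: ldiff_def rdiff_def)
qed

lemma poly_deg_le_rdiff:
  assumes "poly_deg_le G f (Suc m)" "k \<in> carrier G"
  shows "poly_deg_le G (rdiff G k f) m"
  using assms(1)
proof (induction m arbitrary: f)
  case 0
  then show ?case
    using assms(2)
    by (simp add: poly_deg_le_Suc_iff poly_deg_le_0_iff ldiff_rdiff_commute rdiff_eq_0_if_poly_deg_le_0)
next
  case (Suc m)
  have "poly_deg_le G (ldiff G g (rdiff G k f)) m" if "g \<in> carrier G" for g
  proof -
    have "poly_deg_le G (rdiff G k (ldiff G g f)) m"
      using Suc that by (simp add: poly_deg_le_Suc_iff)
    then show ?thesis
      by (rule poly_deg_le_cong[THEN iffD2, rotated]) (simp add: that assms(2) ldiff_rdiff_commute)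
  qed
  then show ?case by (simp add: poly_deg_le_Suc_iff)
qed

lemma ldiff_comp_inv:
  assumes "g \<in> carrier G" "h \<in> carrier G"
  shows "ldiff G g (\<lambda>x. f (inv x)) h = rdiff G g f (inv h)"
  using assms by (simp add: ldiff_def rdiff_def inv_mult_group)

lemma poly_deg_le_comp_inv: "poly_deg_le G f n \<Longrightarrow> poly_deg_le G (\<lambda>x. f (inv x)) n"
proof (induction n arbitrary: f)
  case 0
  then show ?case by (simp add: poly_deg_le_0_iff ldiff_comp_inv rdiff_eq_0_if_poly_deg_le_0)
next
  case (Suc n)
  have "poly_deg_le G (ldiff G g (\<lambda>x. f (inv x))) n" if "g \<in> carrier G" for g
  proof -
    have "poly_deg_le G (\<lambda>x. rdiff G g f (inv x)) n"
      using Suc that by (simp add: poly_deg_le_rdiff)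
    then show ?thesis
      by (rule poly_deg_le_cong[THEN iffD2, rotated]) (simp add: that ldiff_comp_inv)
  qed
  then show ?case by (simp add: poly_deg_le_Suc_iff)
qed

lemma poly_deg_le_comp_inv_iff: "poly_deg_le G (\<lambda>x. f (inv x)) n \<longleftrightarrow> poly_deg_le G f n"
proof
  assume "poly_deg_le G (\<lambda>x. f (inv x)) n"
  then have "poly_deg_le G (\<lambda>x. f (inv (inv x))) n"
    using poly_deg_le_comp_inv[of "\<lambda>x. f (inv x)"] by simp
  then show "poly_deg_le G f n"
    by (rule poly_deg_le_cong[THEN iffD2, rotated]) simp
qed (rule poly_deg_le_comp_inv)

lemma ldiff_comp_mult_left:
  assumes "g \<in> carrier G" "h \<in> carrier G" "k \<in> carrier G"
  shows "ldiff G g (\<lambda>x. f (k \<otimes> x)) h = ldiff G (k \<otimes> g \<otimes> inv k) f (k \<otimes> h)"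
proof -
  have "inv k \<otimes> (k \<otimes> h) = h"
    using assms by (simp add: m_assoc[symmetric])
  then show ?thesis
    using assms by (simp add: ldiff_def inv_mult_group m_assoc)
qed

lemma poly_deg_le_comp_mult_left:
  assumes "k \<in> carrier G"
  shows "poly_deg_le G f n \<Longrightarrow> poly_deg_le G (\<lambda>x. f (k \<otimes> x)) n"
proof (induction n arbitrary: f)
  case 0
  then show ?case using assms by (simp add: poly_deg_le_0_iff ldiff_comp_mult_left)
next
  case (Suc n)
  have "poly_deg_le G (ldiff G g (\<lambda>x. f (k \<otimes> x))) n" if "g \<in> carrier G" for g
  proof -
    have "poly_deg_le G (\<lambda>x. ldiff G (k \<otimes> g \<otimes> inv k) f (k \<otimes> x)) n"
      using Suc that assms by (simp add: poly_deg_le_Suc_iff)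
    then show ?thesis
      by (rule poly_deg_le_cong[THEN iffD2, rotated]) (simp add: that assms ldiff_comp_mult_left)
  qed
  then show ?case by (simp add: poly_deg_le_Suc_iff)
qed

lemma poly_deg_le_comp_mult_left_iff:
  assumes "k \<in> carrier G"
  shows "poly_deg_le G (\<lambda>x. f (k \<otimes> x)) n \<longleftrightarrow> poly_deg_le G f n"
proof
  assume "poly_deg_le G (\<lambda>x. f (k \<otimes> x)) n"
  then have "poly_deg_le G (\<lambda>x. f (k \<otimes> (inv k \<otimes> x))) n"
    using assms poly_deg_le_comp_mult_left[of "inv k" "\<lambda>x. f (k \<otimes> x)" n] by simp
  then show "poly_deg_le G f n"
    by (rule poly_deg_le_cong[THEN iffD2, rotated]) (simp add: assms m_assoc[symmetric])
qed (rule poly_deg_le_comp_mult_left[OF assms])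

lemma not_vanishing_if_not_poly_deg_le_0:
  "\<not> poly_deg_le G f 0 \<Longrightarrow> \<not> (\<forall>h\<in>carrier G. f h = 0)"
  by (auto simp: poly_deg_le_0_iff ldiff_def) (metis inv_closed m_closed)

lemma poly_deg_eq_if_poly_deg_le_iff:
  assumes "\<And>n. poly_deg_le G f n \<longleftrightarrow> poly_deg_le G f' n" and "\<not> poly_deg_le G f' 0"
  shows "is_poly_map G f \<longleftrightarrow> is_poly_map G f'" and "poly_deg G f = poly_deg G f'"
  using assms not_vanishing_if_not_poly_deg_le_0[of f] not_vanishing_if_not_poly_deg_le_0[of f']
  by (simp_all add: is_poly_map_def poly_deg_def)

lemma poly_deg_le_ldiff_at_iff:
  assumes "s \<in> carrier G"
  shows "poly_deg_le G (\<lambda>g. ldiff G g f s) n \<longleftrightarrow> poly_deg_le G f n"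
proof -
  have "poly_deg_le G (\<lambda>g. ldiff G g f s) n \<longleftrightarrow> poly_deg_le G (\<lambda>g. f (inv g \<otimes> s)) n"
    unfolding ldiff_def by (rule poly_deg_le_diff_const_iff)
  also have "\<dots> \<longleftrightarrow> poly_deg_le G (\<lambda>g. (\<lambda>x. f (inv x)) (inv s \<otimes> g)) n"
    using assms by (intro poly_deg_le_cong) (simp add: inv_mult_group)
  also have "\<dots> \<longleftrightarrow> poly_deg_le G f n"
    using assms poly_deg_le_comp_mult_left_iff[of "inv s" "\<lambda>x. f (inv x)"]
    by (simp add: poly_deg_le_comp_inv_iff)
  finally show ?thesis .
qed

lemma poly_deg_le_rdiff_at_iff:
  assumes "s \<in> carrier G"
  shows "poly_deg_le G (\<lambda>g. rdiff G g f s) n \<longleftrightarrow> poly_deg_le G f n"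
  unfolding rdiff_def
  using assms by (simp add: poly_deg_le_diff_const_iff poly_deg_le_comp_mult_left_iff)

end

lemma continuous_map_group_mult:
  assumes "group_topology G T" "continuous_map T T f" "continuous_map T T f'"
  shows "continuous_map T T (\<lambda>x. f x \<otimes>\<^bsub>G\<^esub> f' x)"
proof -
  have "continuous_map T (prod_topology T T) (\<lambda>x. (f x, f' x))"
    using assms(2,3) by (rule continuous_map_pairedI)
  moreover have "continuous_map (prod_topology T T) T (\<lambda>(x, y). x \<otimes>\<^bsub>G\<^esub> y)"
    using assms(1) by (simp add: group_topology_def)
  ultimately show ?thesis
    using continuous_map_compose by (fastforce simp: o_def)
qed

lemma
  assumes "group_topology G T" "continuous_map T euclideanreal f" "s \<in> carrier G"
  shows continuous_map_ldiff_at: "continuous_map T euclideanreal (\<lambda>g. ldiff G g f s)"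
    and continuous_map_rdiff_at: "continuous_map T euclideanreal (\<lambda>g. rdiff G g f s)"
proof -
  have s: "continuous_map T T (\<lambda>_. s)" and inv: "continuous_map T T (\<lambda>g. inv\<^bsub>G\<^esub> g)"
    using assms(1,3) by (auto simp: group_topology_def)
  have "continuous_map T T (\<lambda>g. inv\<^bsub>G\<^esub> g \<otimes>\<^bsub>G\<^esub> s)" "continuous_map T T (\<lambda>g. s \<otimes>\<^bsub>G\<^esub> g)"
    using continuous_map_group_mult[OF assms(1)] s inv by auto
  then have "continuous_map T euclideanreal (\<lambda>g. f (inv\<^bsub>G\<^esub> g \<otimes>\<^bsub>G\<^esub> s))"
    "continuous_map T euclideanreal (\<lambda>g. f (s \<otimes>\<^bsub>G\<^esub> g))"
    using continuous_map_compose[OF _ assms(2)] by (auto simp: o_def)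
  then show "continuous_map T euclideanreal (\<lambda>g. ldiff G g f s)"
    "continuous_map T euclideanreal (\<lambda>g. rdiff G g f s)"
    unfolding ldiff_def rdiff_def by (auto intro: continuous_map_diff)
qed

theorem proposition7p6:
  fixes G :: "('a, 'b) monoid_scheme" and xi :: "'a \<Rightarrow> real" and d :: nat and s :: 'a
  assumes "group G"
    and "is_poly_map G xi"
    and "poly_deg G xi = Some d"
    and "d \<ge> 1"
    and "s \<in> carrier G"
  shows "is_poly_map G (\<lambda>g. ldiff G g xi s)
       \<and> poly_deg G (\<lambda>g. ldiff G g xi s) = zdot_plus (zdot_minus (Some d) (Some 1)) (Some 1)
       \<and> is_poly_map G (\<lambda>g. rdiff G g xi s)
       \<and> poly_deg G (\<lambda>g. rdiff G g xi s) = zdot_plus (zdot_minus (Some d) (Some 1)) (Some 1)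
       \<and> (\<forall>T. group_topology G T \<and> continuous_map T euclideanreal xi \<longrightarrow>
              continuous_map T euclideanreal (\<lambda>g. ldiff G g xi s)
            \<and> continuous_map T euclideanreal (\<lambda>g. rdiff G g xi s))"
proof -
  interpret group G by fact
  have "\<not> poly_deg_le G xi 0"
    using assms(3,4) by (auto simp: poly_deg_def Least_eq_0 split: if_splits)
  moreover have "zdot_plus (zdot_minus (Some d) (Some 1)) (Some 1) = Some d"
    using assms(4) by simp
  ultimately show ?thesis
    using assms(2,3,5)
      poly_deg_eq_if_poly_deg_le_iff[OF poly_deg_le_ldiff_at_iff]
      poly_deg_eq_if_poly_deg_le_iff[OF poly_deg_le_rdiff_at_iff]
      continuous_map_ldiff_at continuous_map_rdiff_at
    by auto
qed

end
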